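(* Let $H$ satisfy Condition (H). For every $u\in(0,\partial_+)$ there is $v\in(u,\partial_+)$ such that for all $t\ge0$ and all $(x,p)\in(-v,v)\times\mathbb R$ with $t<t_{x,p}$ and $X_t^{x,p}\in(-u,u)$, one has $X_s^{x,p}\in(-v,v)$ for all $s\in[0,t]$.
   Context: $\mathbb K$ is either $\mathbb R$ or $[-1,1]$, with interior $\mathbb K^\circ$; $\partial_-=-\infty,\partial_+=+\infty$ if $\mathbb K=\mathbb R$ and $\partial_-=-1,\partial_+=1$ if $\mathbb K=[-1,1]$. The Lagrangian is $\mathcal L(x,v)=\sup_p(pv-H(x,p))$. The Hamilton equations are $\dot X=\partial_pH(X,P)$, $\dot P=-\partial_xH(X,P)$; $(X_s^{x,p},P_s^{x,p})$ is the solution from $(x,p)$ on its maximal interval of existence $[0,t_{x,p})$. Condition (H) on $H:\mathbb K\times\mathbb R\to\mathbb R$: $H(x,0)=0$ for all $x$, and (H1) $H$ is $C^2$ with $\partial_p^2H>0$ on $\mathbb K\times\mathbb R$; if $\mathbb K=[-1,1]$, $H$ is the restriction of a $C^2$ function on $(-1-\epsilon,1+\epsilon)\times\mathbb R$ for some $\epsilon>0$. (H2) for every compact $K\subseteq\mathbb K^\circ$ there is $\theta_K:[0,\infty)\to[0,\infty)$ with $\theta_K(r)/r\to\infty$ as $r\to\infty$; for every $M\ge0$ a constant $k_M$ with $\theta_K(r+m)\le k_M(1+\theta_K(r))$ for all $m\in[0,M]$, $r\ge0$; constants $c_K,C_K$ with $\mathcal L(x,v)\ge\theta_K(|v|)-c_K$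 and $|\partial_x\mathcal L(x,v)|+|\partial_v\mathcal L(x,v)|\le C_K\theta_K(|v|)$ for all $x\in K,v\in\mathbb R$. (H3) for each compact $K\subseteq\mathbb K^\circ$, $\lim_{|p|\to\infty}\inf_{x\in K}H(x,p)/|p|=\infty$; if $\mathbb K=[-1,1]$ moreover $\lim_{p\to\infty}H(-1,p)/p=\infty$ and $\lim_{p\to-\infty}H(1,p)/(-p)=\infty$. (H4) $\lim_{x\to\partial_-}\operatorname{argmin}_pH(x,p)=-\infty$ and $\lim_{x\to\partial_+}\operatorname{argmin}_pH(x,p)=+\infty$. (H5) there are $(y_n^+,q_n^+)\in\mathbb K^\circ\times(0,\infty)$ converging to $(\partial_+,+\infty)$ with $\partial_pH(y_n^+,q)\ge0$ for $q\ge q_n^+$ and $-\partial_xH(y,q_n^+)\ge0$ for $y\ge y_n^+$, and $(y_n^-,q_n^-)\in\mathbb K^\circ\times(-\infty,0)$ converging to $(\partial_-,-\infty)$ with $\partial_pH(y_n^-,q)\le0$ for $q\le q_n^-$ and $-\partial_xH(y,q_n^-)\le0$ for $y\le y_n^-$. *)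

theory Defs
  imports "HOL-Analysis.Analysis"
begin

text \<open>The state space: b = False means K = R, b = True means K = [-1,1].\<close>
definition Kset :: "bool \<Rightarrow> real set" where
  "Kset b = (if b then {-1..1} else UNIV)"

definition to_dminus :: "bool \<Rightarrow> real filter" where
  "to_dminus b = (if b then at_right (-1) else at_bot)"

definition to_dplus :: "bool \<Rightarrow> real filter" where
  "to_dplus b = (if b then at_left 1 else at_top)"

definition C2_on :: "(real \<times> real \<Rightarrow> real) \<Rightarrow> (real \<times> real) set \<Rightarrow> bool" where
  "C2_on f U \<longleftrightarrow> (\<exists>(Df :: real \<times> real \<Rightarrow> ((real \<times> real) \<Rightarrow>\<^sub>L real))
      (D2f :: real \<times> real \<Rightarrow> ((real \<times> real) \<Rightarrow>\<^sub>L ((real \<times> real) \<Rightarrow>\<^sub>L real))).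
      (\<forall>z\<in>U. (f has_derivative blinfun_apply (Df z)) (at z)) \<and>
      (\<forall>z\<in>U. (Df has_derivative blinfun_apply (D2f z)) (at z)) \<and>
      continuous_on U D2f)"

definition dHx :: "(real \<Rightarrow> real \<Rightarrow> real) \<Rightarrow> real \<Rightarrow> real \<Rightarrow> real" where
  "dHx H x p = deriv (\<lambda>y. H y p) x"

definition dHp :: "(real \<Rightarrow> real \<Rightarrow> real) \<Rightarrow> real \<Rightarrow> real \<Rightarrow> real" where
  "dHp H x p = deriv (\<lambda>q. H x q) p"

definition dHpp :: "(real \<Rightarrow> real \<Rightarrow> real) \<Rightarrow> real \<Rightarrow> real \<Rightarrow> real" where
  "dHpp H x p = deriv (\<lambda>q. dHp H x q) p"

definition Lag :: "(real \<Rightarrow> real \<Rightarrow> real) \<Rightarrow> real \<Rightarrow> real \<Rightarrow> real" where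
  "Lag H x v = (SUP p. p * v - H x p)"

definition dLx :: "(real \<Rightarrow> real \<Rightarrow> real) \<Rightarrow> real \<Rightarrow> real \<Rightarrow> real" where
  "dLx H x v = deriv (\<lambda>y. Lag H y v) x"

definition dLv :: "(real \<Rightarrow> real \<Rightarrow> real) \<Rightarrow> real \<Rightarrow> real \<Rightarrow> real" where
  "dLv H x v = deriv (\<lambda>w. Lag H x w) v"

definition argminp :: "(real \<Rightarrow> real \<Rightarrow> real) \<Rightarrow> real \<Rightarrow> real" where
  "argminp H x = arg_min (H x) (\<lambda>_. True)"

definition condH0 :: "bool \<Rightarrow> (real \<Rightarrow> real \<Rightarrow> real) \<Rightarrow> bool" where
  "condH0 b H \<longleftrightarrow> (\<forall>x\<in>Kset b. H x 0 = 0)"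

definition condH1 :: "bool \<Rightarrow> (real \<Rightarrow> real \<Rightarrow> real) \<Rightarrow> bool" where
  "condH1 b H \<longleftrightarrow>
     (if b then (\<exists>\<epsilon>>0. C2_on (\<lambda>(x,p). H x p) ({-1-\<epsilon><..<1+\<epsilon>} \<times> UNIV))
      else C2_on (\<lambda>(x,p). H x p) UNIV) \<and>
     (\<forall>x\<in>Kset b. \<forall>p. dHpp H x p > 0)"

definition condH2 :: "bool \<Rightarrow> (real \<Rightarrow> real \<Rightarrow> real) \<Rightarrow> bool" where
  "condH2 b H \<longleftrightarrow> (\<forall>C. compact C \<and> C \<subseteq> interior (Kset b) \<longrightarrow>
     (\<exists>\<theta> :: real \<Rightarrow> real.
        (\<forall>r\<ge>0. \<theta> r \<ge> 0) \<and>
        filterlim (\<lambda>r. \<theta> r / r) at_top at_top \<and>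
        (\<forall>M\<ge>0. \<exists>k. \<forall>m\<in>{0..M}. \<forall>r\<ge>0. \<theta> (r + m) \<le> k * (1 + \<theta> r)) \<and>
        (\<exists>c Cc. \<forall>x\<in>C. \<forall>v. Lag H x v \<ge> \<theta> \<bar>v\<bar> - c \<and>
                 \<bar>dLx H x v\<bar> + \<bar>dLv H x v\<bar> \<le> Cc * \<theta> \<bar>v\<bar>)))"

definition condH3 :: "bool \<Rightarrow> (real \<Rightarrow> real \<Rightarrow> real) \<Rightarrow> bool" where
  "condH3 b H \<longleftrightarrow> (\<forall>C. compact C \<and> C \<noteq> {} \<and> C \<subseteq> interior (Kset b) \<longrightarrow>
       filterlim (\<lambda>p. (INF x\<in>C. H x p) / \<bar>p\<bar>) at_top at_infinity) \<and>
     (b \<longrightarrow> filterlim (\<lambda>p. H (-1) p / p) at_top at_top \<and>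
            filterlim (\<lambda>p. H 1 p / (-p)) at_top at_bot)"

definition condH4 :: "bool \<Rightarrow> (real \<Rightarrow> real \<Rightarrow> real) \<Rightarrow> bool" where
  "condH4 b H \<longleftrightarrow> filterlim (argminp H) at_bot (to_dminus b) \<and>
                   filterlim (argminp H) at_top (to_dplus b)"

definition condH5 :: "bool \<Rightarrow> (real \<Rightarrow> real \<Rightarrow> real) \<Rightarrow> bool" where
  "condH5 b H \<longleftrightarrow>
     (\<exists>yp qp :: nat \<Rightarrow> real.
        (\<forall>n. yp n \<in> interior (Kset b) \<and> qp n > 0) \<and>
        filterlim yp (to_dplus b) sequentially \<and> filterlim qp at_top sequentially \<and>
        (\<forall>n q. q \<ge> qp n \<longrightarrow> dHp H (yp n) q \<ge> 0) \<and>
        (\<forall>n y. y \<in> Kset b \<and> y \<ge> yp n \<longrightarrow> - dHx H y (qp n) \<ge> 0)) \<and>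
     (\<exists>ym qm :: nat \<Rightarrow> real.
        (\<forall>n. ym n \<in> interior (Kset b) \<and> qm n < 0) \<and>
        filterlim ym (to_dminus b) sequentially \<and> filterlim qm at_bot sequentially \<and>
        (\<forall>n q. q \<le> qm n \<longrightarrow> dHp H (ym n) q \<le> 0) \<and>
        (\<forall>n y. y \<in> Kset b \<and> y \<le> ym n \<longrightarrow> - dHx H y (qm n) \<le> 0))"

definition condH :: "bool \<Rightarrow> (real \<Rightarrow> real \<Rightarrow> real) \<Rightarrow> bool" where
  "condH b H \<longleftrightarrow> condH0 b H \<and> condH1 b H \<and> condH2 b H \<and> condH3 b H \<and>
                 condH4 b H \<and> condH5 b H"

definition ham_sol :: "bool \<Rightarrow> (real \<Rightarrow> real \<Rightarrow> real) \<Rightarrow> real \<Rightarrow> real \<Rightarrow> real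
    \<Rightarrow> (real \<Rightarrow> real \<times> real) \<Rightarrow> bool" where
  "ham_sol b H x p T Y \<longleftrightarrow> 0 < T \<and> Y 0 = (x, p) \<and>
     (\<forall>s\<in>{0..<T}. fst (Y s) \<in> Kset b \<and>
        (Y has_vector_derivative
           (dHp H (fst (Y s)) (snd (Y s)), - dHx H (fst (Y s)) (snd (Y s))))
        (at s within {0..<T}))"

definition exit_time :: "bool \<Rightarrow> (real \<Rightarrow> real \<Rightarrow> real) \<Rightarrow> real \<Rightarrow> real \<Rightarrow> ereal" where
  "exit_time b H x p = (SUP T\<in>{T. \<exists>Y. ham_sol b H x p T Y}. ereal T)"

definition flow :: "bool \<Rightarrow> (real \<Rightarrow> real \<Rightarrow> real) \<Rightarrow> real \<Rightarrow> real \<Rightarrow> real \<Rightarrow> real \<times> real" where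
  "flow b H x p s = (THE z. \<exists>T Y. ham_sol b H x p T Y \<and> s < T \<and> Y s = z)"

definition Xflow :: "bool \<Rightarrow> (real \<Rightarrow> real \<Rightarrow> real) \<Rightarrow> real \<Rightarrow> real \<Rightarrow> real \<Rightarrow> real" where
  "Xflow b H x p s = fst (flow b H x p s)"

end

theory Submission
  imports Defs
begin

text \<open>
  A trajectory that starts in \<open>(-v, v)\<close> and ends in \<open>(-u, u)\<close> but reaches \<open>v\<close> in between has a
  turning point \<open>x \<ge> v\<close>, where \<open>\<partial>\<^sub>pH(x, p) = 0\<close>. By (H4) the zero of the increasing function
  \<open>\<partial>\<^sub>pH(x, \<cdot>)\<close> lies above any prescribed level \<open>q\<close> once \<open>x\<close> is close to the upper end of \<open>K\<close>,
  so at the turning point \<open>p \<ge> q\<close>. By (H5) the quadrant \<open>[y, \<infinity>) \<times> [q, \<infinity>)\<close>, with \<open>u < y \<le> v\<close>,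
  cannot be left by the Hamiltonian flow, so the trajectory never returns below \<open>y\<close>. The lower end
  is the upper end for the reflected system \<open>(x, p) \<mapsto> (-x, -p)\<close>. Local Lipschitz continuity of
  the Hamiltonian vector field, from (H1), gives the comparison and uniqueness arguments behind
  the invariance of the quadrant and the well-definedness of \<open>X\<^sub>s\<close>.
\<close>

section \<open>Planar systems with locally Lipschitz vector fields\<close>

definition lipschitz_on_bounded_sets :: "real set \<Rightarrow> (real \<Rightarrow> real \<Rightarrow> real) \<Rightarrow> bool" where
  "lipschitz_on_bounded_sets S F \<longleftrightarrow> (\<forall>c. \<exists>L\<ge>0. \<forall>x1\<in>S. \<forall>x2\<in>S. \<forall>p1 p2.
     \<bar>x1\<bar> \<le> c \<longrightarrow> \<bar>x2\<bar> \<le> c \<longrightarrow> \<bar>p1\<bar> \<le> c \<longrightarrow> \<bar>p2\<bar> \<le> c \<longrightarrow>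
     \<bar>F x1 p1 - F x2 p2\<bar> \<le> L * (\<bar>x1 - x2\<bar> + \<bar>p1 - p2\<bar>))"

lemma lipschitz_on_bounded_setsE:
  assumes "lipschitz_on_bounded_sets S F"
  obtains L where "0 \<le> L"
    and "\<And>x1 x2 p1 p2. x1 \<in> S \<Longrightarrow> x2 \<in> S \<Longrightarrow> \<bar>x1\<bar> \<le> c \<Longrightarrow> \<bar>x2\<bar> \<le> c \<Longrightarrow> \<bar>p1\<bar> \<le> c \<Longrightarrow> \<bar>p2\<bar> \<le> c \<Longrightarrow>
           \<bar>F x1 p1 - F x2 p2\<bar> \<le> L * (\<bar>x1 - x2\<bar> + \<bar>p1 - p2\<bar>)"
proof -
  obtain L where "0 \<le> L" and L: "\<forall>x1\<in>S. \<forall>x2\<in>S. \<forall>p1 p2. \<bar>x1\<bar> \<le> c \<longrightarrow> \<bar>x2\<bar> \<le> c \<longrightarrow>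
      \<bar>p1\<bar> \<le> c \<longrightarrow> \<bar>p2\<bar> \<le> c \<longrightarrow> \<bar>F x1 p1 - F x2 p2\<bar> \<le> L * (\<bar>x1 - x2\<bar> + \<bar>p1 - p2\<bar>)"
    using assms unfolding lipschitz_on_bounded_sets_def by blast
  show thesis
    by (rule that[OF \<open>0 \<le> L\<close>]) (use L in blast)
qed

lemma lipschitz_on_bounded_sets_common_constant:
  assumes "lipschitz_on_bounded_sets S F" "lipschitz_on_bounded_sets S G"
  obtains L where "0 \<le> L"
    and "\<And>x1 x2 p1 p2. x1 \<in> S \<Longrightarrow> x2 \<in> S \<Longrightarrow> \<bar>x1\<bar> \<le> c \<Longrightarrow> \<bar>x2\<bar> \<le> c \<Longrightarrow> \<bar>p1\<bar> \<le> c \<Longrightarrow> \<bar>p2\<bar> \<le> c \<Longrightarrow>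
           \<bar>F x1 p1 - F x2 p2\<bar> \<le> L * (\<bar>x1 - x2\<bar> + \<bar>p1 - p2\<bar>) \<and>
           \<bar>G x1 p1 - G x2 p2\<bar> \<le> L * (\<bar>x1 - x2\<bar> + \<bar>p1 - p2\<bar>)"
proof -
  obtain L1 where L1: "0 \<le> L1" and F: "\<And>x1 x2 p1 p2. x1 \<in> S \<Longrightarrow> x2 \<in> S \<Longrightarrow> \<bar>x1\<bar> \<le> c \<Longrightarrow> \<bar>x2\<bar> \<le> c \<Longrightarrow>
      \<bar>p1\<bar> \<le> c \<Longrightarrow> \<bar>p2\<bar> \<le> c \<Longrightarrow> \<bar>F x1 p1 - F x2 p2\<bar> \<le> L1 * (\<bar>x1 - x2\<bar> + \<bar>p1 - p2\<bar>)"
    using assms(1) by (rule lipschitz_on_bounded_setsE[where c=c]) blast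
  obtain L2 where L2: "0 \<le> L2" and G: "\<And>x1 x2 p1 p2. x1 \<in> S \<Longrightarrow> x2 \<in> S \<Longrightarrow> \<bar>x1\<bar> \<le> c \<Longrightarrow> \<bar>x2\<bar> \<le> c \<Longrightarrow>
      \<bar>p1\<bar> \<le> c \<Longrightarrow> \<bar>p2\<bar> \<le> c \<Longrightarrow> \<bar>G x1 p1 - G x2 p2\<bar> \<le> L2 * (\<bar>x1 - x2\<bar> + \<bar>p1 - p2\<bar>)"
    using assms(2) by (rule lipschitz_on_bounded_setsE[where c=c]) blast
  show thesis
  proof (rule that[of "max L1 L2"])
    fix x1 x2 p1 p2 assume "x1 \<in> S" "x2 \<in> S" "\<bar>x1\<bar> \<le> c" "\<bar>x2\<bar> \<le> c" "\<bar>p1\<bar> \<le> c" "\<bar>p2\<bar> \<le> c"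
    moreover define d where "d = \<bar>x1 - x2\<bar> + \<bar>p1 - p2\<bar>"
    moreover have "L1 * d \<le> max L1 L2 * d" "L2 * d \<le> max L1 L2 * d"
      by (intro mult_right_mono; simp add: d_def)+
    ultimately show "\<bar>F x1 p1 - F x2 p2\<bar> \<le> max L1 L2 * d \<and> \<bar>G x1 p1 - G x2 p2\<bar> \<le> max L1 L2 * d"
      using F G by (meson order_trans)
  qed (use L1 in simp)
qed

definition mirror :: "(real \<Rightarrow> real \<Rightarrow> real) \<Rightarrow> real \<Rightarrow> real \<Rightarrow> real" where
  "mirror F x p = - F (- x) (- p)"

lemma lipschitz_on_bounded_sets_uminus:
  "lipschitz_on_bounded_sets S F \<Longrightarrow> lipschitz_on_bounded_sets S (\<lambda>x p. - F x p)"
  unfolding lipschitz_on_bounded_sets_def by (simp add: abs_minus_commute)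

lemma lipschitz_on_bounded_sets_mirror:
  assumes "lipschitz_on_bounded_sets S F" and "\<And>x. x \<in> S \<Longrightarrow> - x \<in> S"
  shows "lipschitz_on_bounded_sets S (mirror F)"
  unfolding lipschitz_on_bounded_sets_def
proof
  fix c
  obtain L where "0 \<le> L" and L: "\<And>x1 x2 p1 p2. x1 \<in> S \<Longrightarrow> x2 \<in> S \<Longrightarrow> \<bar>x1\<bar> \<le> c \<Longrightarrow> \<bar>x2\<bar> \<le> c \<Longrightarrow>
      \<bar>p1\<bar> \<le> c \<Longrightarrow> \<bar>p2\<bar> \<le> c \<Longrightarrow> \<bar>F x1 p1 - F x2 p2\<bar> \<le> L * (\<bar>x1 - x2\<bar> + \<bar>p1 - p2\<bar>)"
    using assms(1) by (rule lipschitz_on_bounded_setsE[where c=c]) blast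
  have "\<bar>mirror F x1 p1 - mirror F x2 p2\<bar> \<le> L * (\<bar>x1 - x2\<bar> + \<bar>p1 - p2\<bar>)"
    if "x1 \<in> S" "x2 \<in> S" "\<bar>x1\<bar> \<le> c" "\<bar>x2\<bar> \<le> c" "\<bar>p1\<bar> \<le> c" "\<bar>p2\<bar> \<le> c" for x1 x2 p1 p2
  proof -
    have "\<bar>F (- x1) (- p1) - F (- x2) (- p2)\<bar> \<le> L * (\<bar>- x1 - - x2\<bar> + \<bar>- p1 - - p2\<bar>)"
      by (rule L) (use that assms(2) in auto)
    moreover have "\<bar>- x1 - - x2\<bar> = \<bar>x1 - x2\<bar>" "\<bar>- p1 - - p2\<bar> = \<bar>p1 - p2\<bar>"
      "\<bar>mirror F x1 p1 - mirror F x2 p2\<bar> = \<bar>F (- x1) (- p1) - F (- x2) (- p2)\<bar>"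
      by (simp_all add: mirror_def abs_minus_commute)
    ultimately show ?thesis by simp
  qed
  with \<open>0 \<le> L\<close> show "\<exists>L\<ge>0. \<forall>x1\<in>S. \<forall>x2\<in>S. \<forall>p1 p2. \<bar>x1\<bar> \<le> c \<longrightarrow> \<bar>x2\<bar> \<le> c \<longrightarrow> \<bar>p1\<bar> \<le> c \<longrightarrow> \<bar>p2\<bar> \<le> c \<longrightarrow>
       \<bar>mirror F x1 p1 - mirror F x2 p2\<bar> \<le> L * (\<bar>x1 - x2\<bar> + \<bar>p1 - p2\<bar>)"
    by blast
qed

definition planar_solution :: "(real \<Rightarrow> real \<Rightarrow> real) \<Rightarrow> (real \<Rightarrow> real \<Rightarrow> real) \<Rightarrow> real \<Rightarrow> real
    \<Rightarrow> (real \<Rightarrow> real) \<Rightarrow> (real \<Rightarrow> real) \<Rightarrow> bool" where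
  "planar_solution F G a b X P \<longleftrightarrow> continuous_on {a..b} X \<and> continuous_on {a..b} P \<and>
     (\<forall>s\<in>{a<..<b}. (X has_real_derivative F (X s) (P s)) (at s) \<and>
                   (P has_real_derivative G (X s) (P s)) (at s))"

lemma planar_solution_subinterval:
  "planar_solution F G a b X P \<Longrightarrow> a \<le> a' \<Longrightarrow> b' \<le> b \<Longrightarrow> planar_solution F G a' b' X P"
  unfolding planar_solution_def by (auto intro: continuous_on_subset)

lemma planar_solution_mirror:
  assumes "planar_solution F G a b X P"
  shows "planar_solution (mirror F) (mirror G) a b (\<lambda>s. - X s) (\<lambda>s. - P s)"
  using assms unfolding planar_solution_def mirror_def
  by (auto intro: continuous_on_minus DERIV_minus)

lemma planar_solution_bounded:
  assumes "planar_solution F G a b X P"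
  obtains c where "\<And>s. s \<in> {a..b} \<Longrightarrow> \<bar>X s\<bar> \<le> c \<and> \<bar>P s\<bar> \<le> c"
proof -
  have "compact ((\<lambda>s. (X s, P s)) ` {a..b})"
    using assms unfolding planar_solution_def
    by (intro compact_continuous_image continuous_on_Pair) auto
  then obtain c where c: "\<forall>z\<in>(\<lambda>s. (X s, P s)) ` {a..b}. norm z \<le> c"
    using compact_imp_bounded bounded_iff by metis
  show thesis
  proof (rule that)
    fix s assume "s \<in> {a..b}"
    then have "norm (X s, P s) \<le> c" using c by blast
    then show "\<bar>X s\<bar> \<le> c \<and> \<bar>P s\<bar> \<le> c"
      using norm_fst_le[of "X s" "P s"] norm_snd_le[of "P s" "X s"] by auto
  qed
qed

lemma vanishes_on_short_interval:
  fixes D :: "real \<Rightarrow> real"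
  assumes "\<sigma> \<le> e" "continuous_on {\<sigma>..e} D" "D \<sigma> = 0" and nonneg: "\<And>r. r \<in> {\<sigma>..e} \<Longrightarrow> 0 \<le> D r"
    and "0 \<le> L" "L * (e - \<sigma>) \<le> 1 / 2"
    and growth: "\<And>s M. \<sigma> \<le> s \<Longrightarrow> s \<le> e \<Longrightarrow> (\<forall>r\<in>{\<sigma>..s}. D r \<le> M) \<Longrightarrow> D s \<le> L * (s - \<sigma>) * M"
    and r: "r \<in> {\<sigma>..e}"
  shows "D r = 0"
proof -
  obtain m where m: "m \<in> {\<sigma>..e}" and max: "\<forall>r\<in>{\<sigma>..e}. D r \<le> D m"
    using continuous_attains_sup[of "{\<sigma>..e}" D] assms(1,2) by auto
  have "0 \<le> D m" using nonneg m by blast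
  have "D m \<le> L * (m - \<sigma>) * D m" using growth[of m "D m"] m max by auto
  also have "\<dots> \<le> L * (e - \<sigma>) * D m"
    using m \<open>0 \<le> L\<close> \<open>0 \<le> D m\<close> by (intro mult_right_mono mult_left_mono) auto
  also have "\<dots> \<le> 1 / 2 * D m" using assms(6) \<open>0 \<le> D m\<close> by (rule mult_right_mono)
  finally have "D m \<le> 0" by simp
  moreover have "D r \<le> D m" "0 \<le> D r" using max nonneg r by auto
  ultimately show "D r = 0" by linarith
qed

lemma vanishes_if_growth_bounded:
  fixes D :: "real \<Rightarrow> real"
  assumes cont: "continuous_on {a..c} D" and "D a = 0"
    and nonneg: "\<And>s. s \<in> {a..c} \<Longrightarrow> 0 \<le> D s" and "0 \<le> L"
    and growth: "\<And>\<sigma> s M. a \<le> \<sigma> \<Longrightarrow> \<sigma> \<le> s \<Longrightarrow> s \<le> c \<Longrightarrow> D \<sigma> = 0 \<Longrightarrow>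
        (\<forall>r\<in>{\<sigma>..s}. D r \<le> M) \<Longrightarrow> D s \<le> L * (s - \<sigma>) * M"
    and s: "s \<in> {a..c}"
  shows "D s = 0"
proof -
  define h where "h = 1 / (2 * L + 1)"
  have "0 < h" and Lh: "L * h \<le> 1 / 2"
    using \<open>0 \<le> L\<close> by (simp_all add: h_def field_simps)
  have "\<forall>r\<in>{a..min c (a + real k * h)}. D r = 0" for k
  proof (induction k)
    case 0
    then show ?case using \<open>D a = 0\<close> by auto
  next
    case (Suc k)
    define \<sigma> where "\<sigma> = min c (a + real k * h)"
    define e where "e = min c (a + real (Suc k) * h)"
    have "a \<le> \<sigma>" "\<sigma> \<le> e" "e \<le> c" "L * (e - \<sigma>) \<le> 1 / 2"
      using s \<open>0 < h\<close> \<open>0 \<le> L\<close> Lh mult_left_mono[of "e - \<sigma>" h L]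
      by (auto simp: \<sigma>_def e_def min_def algebra_simps)
    have "D r = 0" if "r \<in> {\<sigma>..e}" for r
    proof (rule vanishes_on_short_interval[OF \<open>\<sigma> \<le> e\<close> _ _ _ \<open>0 \<le> L\<close> \<open>L * (e - \<sigma>) \<le> 1 / 2\<close> _ that])
      show "continuous_on {\<sigma>..e} D" using cont \<open>a \<le> \<sigma>\<close> \<open>e \<le> c\<close> by (auto elim!: continuous_on_subset)
      show "D \<sigma> = 0" using Suc.IH \<open>a \<le> \<sigma>\<close> by (auto simp: \<sigma>_def)
      then show "D s \<le> L * (s - \<sigma>) * M" if "\<sigma> \<le> s" "s \<le> e" "\<forall>r\<in>{\<sigma>..s}. D r \<le> M" for s M
        using growth[OF \<open>a \<le> \<sigma>\<close>] that \<open>e \<le> c\<close> by auto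
    qed (use nonneg \<open>a \<le> \<sigma>\<close> \<open>e \<le> c\<close> in auto)
    with Suc.IH show ?case by (auto simp: \<sigma>_def e_def)
  qed
  moreover obtain k :: nat where "(s - a) / h \<le> real k" using real_arch_simple by blast
  then have "s \<le> a + real k * h" using \<open>0 < h\<close> by (simp add: field_simps)
  ultimately show "D s = 0" using s by auto
qed

lemma last_time_above:
  fixes f :: "real \<Rightarrow> real"
  assumes "\<sigma> \<le> s" "continuous_on {\<sigma>..s} f" "q \<le> f \<sigma>" "f s < q"
  obtains r where "\<sigma> \<le> r" "r < s" "q \<le> f r" "\<And>z. r < z \<Longrightarrow> z \<le> s \<Longrightarrow> f z < q"
proof -
  define Z where "Z = {z \<in> {\<sigma>..s}. q \<le> f z}"
  have "closed Z"
    unfolding Z_def by (rule continuous_on_closed_Collect_le) (use assms(2) in auto)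
  moreover have "bounded Z" by (rule bounded_subset[OF bounded_closed_interval]) (auto simp: Z_def)
  ultimately have "compact Z" by (simp add: compact_eq_bounded_closed)
  moreover have "\<sigma> \<in> Z" using assms by (auto simp: Z_def)
  ultimately obtain r where r: "r \<in> Z" and last: "\<And>z. z \<in> Z \<Longrightarrow> z \<le> r"
    using compact_attains_sup[of Z] by auto
  then have "r \<in> {\<sigma>..s}" "q \<le> f r" by (simp_all add: Z_def)
  show thesis
  proof (rule that)
    show "\<sigma> \<le> r" "q \<le> f r" using \<open>r \<in> {\<sigma>..s}\<close> \<open>q \<le> f r\<close> by simp_all
    show "r < s" using \<open>r \<in> {\<sigma>..s}\<close> \<open>q \<le> f r\<close> \<open>f s < q\<close> by (cases "r = s") auto
    show "f z < q" if "r < z" "z \<le> s" for z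
    proof (rule ccontr)
      assume "\<not> f z < q"
      then have "z \<in> Z" using that \<open>\<sigma> \<le> r\<close> by (simp add: Z_def)
      with last that(1) show False by fastforce
    qed
  qed
qed

lemma deficit_growth_bound:
  fixes f f' :: "real \<Rightarrow> real"
  assumes "\<sigma> \<le> s" "continuous_on {\<sigma>..s} f" "0 \<le> f \<sigma>" "0 \<le> K"
    and deriv: "\<And>z. \<sigma> < z \<Longrightarrow> z < s \<Longrightarrow> (f has_real_derivative f' z) (at z)"
    and slope: "\<And>z. \<sigma> < z \<Longrightarrow> z < s \<Longrightarrow> f z < 0 \<Longrightarrow> - K \<le> f' z"
  shows "- K * (s - \<sigma>) \<le> f s"
proof (cases "0 \<le> f s")
  case True
  moreover have "0 \<le> K * (s - \<sigma>)" using assms(1,4) by simp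
  ultimately show ?thesis by linarith
next
  case False
  then have "f s < 0" by simp
  then obtain r where r: "\<sigma> \<le> r" "r < s" "0 \<le> f r" and neg: "\<And>z. r < z \<Longrightarrow> z \<le> s \<Longrightarrow> f z < 0"
    using last_time_above[OF assms(1,2,3)] by blast
  have "continuous_on {r..s} f" using assms(2) r by (auto intro: continuous_on_subset)
  moreover have "f differentiable (at z)" if "r < z" "z < s" for z
    using deriv that r real_differentiable_def by (meson le_less_trans)
  ultimately obtain z l where z: "r < z" "z < s" and "DERIV f z :> l" and mvt: "f s - f r = (s - r) * l"
    using MVT[OF r(2)] by blast
  then have "l = f' z" using deriv r by (meson DERIV_unique le_less_trans)
  then have "- K \<le> l" using slope neg z r by (meson le_less_trans less_imp_le)
  then have "(s - r) * - K \<le> (s - r) * l" using r by (intro mult_left_mono) auto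
  moreover have "(s - \<sigma>) * - K \<le> (s - r) * - K" using r \<open>0 \<le> K\<close> by (intro mult_right_mono_neg) auto
  ultimately show ?thesis using mvt r by (simp add: algebra_simps)
qed

lemma difference_growth_bound:
  fixes f f' :: "real \<Rightarrow> real"
  assumes "\<sigma> \<le> s" "continuous_on {\<sigma>..s} f" "f \<sigma> = 0" "0 \<le> K"
    and deriv: "\<And>z. \<sigma> < z \<Longrightarrow> z < s \<Longrightarrow> (f has_real_derivative f' z) (at z)"
    and bound: "\<And>z. \<sigma> < z \<Longrightarrow> z < s \<Longrightarrow> \<bar>f' z\<bar> \<le> K"
  shows "\<bar>f s\<bar> \<le> K * (s - \<sigma>)"
proof -
  have slope: "- K \<le> f' z \<and> - K \<le> - f' z" if "\<sigma> < z" "z < s" for z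
    using bound[OF that] by (simp add: abs_le_iff)
  have "- K * (s - \<sigma>) \<le> f s"
    by (rule deficit_growth_bound[where f' = f']) (use assms slope in auto)
  moreover have "- K * (s - \<sigma>) \<le> - f s"
    by (rule deficit_growth_bound[where f' = "\<lambda>z. - f' z"])
      (use assms slope in \<open>auto intro: continuous_on_minus DERIV_minus\<close>)
  ultimately show ?thesis by linarith
qed

lemma planar_solutions_divergence_bound:
  assumes sol1: "planar_solution F G \<sigma> s X1 P1" and sol2: "planar_solution F G \<sigma> s X2 P2"
    and "\<sigma> \<le> s" "X1 \<sigma> = X2 \<sigma>" "P1 \<sigma> = P2 \<sigma>" "0 \<le> K"
    and bound: "\<And>z. z \<in> {\<sigma><..<s} \<Longrightarrow> \<bar>F (X1 z) (P1 z) - F (X2 z) (P2 z)\<bar> \<le> K \<and>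
                                      \<bar>G (X1 z) (P1 z) - G (X2 z) (P2 z)\<bar> \<le> K"
  shows "\<bar>X1 s - X2 s\<bar> + \<bar>P1 s - P2 s\<bar> \<le> 2 * K * (s - \<sigma>)"
proof -
  have "\<bar>X1 s - X2 s\<bar> \<le> K * (s - \<sigma>)"
    by (rule difference_growth_bound[where f = "\<lambda>z. X1 z - X2 z"
          and f' = "\<lambda>z. F (X1 z) (P1 z) - F (X2 z) (P2 z)"])
      (use assms in \<open>auto simp: planar_solution_def intro!: continuous_intros DERIV_diff\<close>)
  moreover have "\<bar>P1 s - P2 s\<bar> \<le> K * (s - \<sigma>)"
    by (rule difference_growth_bound[where f = "\<lambda>z. P1 z - P2 z"
          and f' = "\<lambda>z. G (X1 z) (P1 z) - G (X2 z) (P2 z)"])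
      (use assms in \<open>auto simp: planar_solution_def intro!: continuous_intros DERIV_diff\<close>)
  ultimately show ?thesis by simp
qed

lemma planar_solution_unique:
  assumes sol1: "planar_solution F G a b X1 P1" and sol2: "planar_solution F G a b X2 P2"
    and in_S: "\<And>s. s \<in> {a..b} \<Longrightarrow> X1 s \<in> S \<and> X2 s \<in> S"
    and lip: "lipschitz_on_bounded_sets S F" "lipschitz_on_bounded_sets S G"
    and init: "X1 a = X2 a" "P1 a = P2 a" and s: "s \<in> {a..b}"
  shows "X1 s = X2 s \<and> P1 s = P2 s"
proof -
  obtain c1 where c1: "\<And>s. s \<in> {a..b} \<Longrightarrow> \<bar>X1 s\<bar> \<le> c1 \<and> \<bar>P1 s\<bar> \<le> c1"
    using planar_solution_bounded[OF sol1] by blast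
  obtain c2 where c2: "\<And>s. s \<in> {a..b} \<Longrightarrow> \<bar>X2 s\<bar> \<le> c2 \<and> \<bar>P2 s\<bar> \<le> c2"
    using planar_solution_bounded[OF sol2] by blast
  obtain L where "0 \<le> L" and L: "\<And>x1 x2 p1 p2. x1 \<in> S \<Longrightarrow> x2 \<in> S \<Longrightarrow>
      \<bar>x1\<bar> \<le> max c1 c2 \<Longrightarrow> \<bar>x2\<bar> \<le> max c1 c2 \<Longrightarrow> \<bar>p1\<bar> \<le> max c1 c2 \<Longrightarrow> \<bar>p2\<bar> \<le> max c1 c2 \<Longrightarrow>
      \<bar>F x1 p1 - F x2 p2\<bar> \<le> L * (\<bar>x1 - x2\<bar> + \<bar>p1 - p2\<bar>) \<and>
      \<bar>G x1 p1 - G x2 p2\<bar> \<le> L * (\<bar>x1 - x2\<bar> + \<bar>p1 - p2\<bar>)"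
    using lip by (rule lipschitz_on_bounded_sets_common_constant[where c = "max c1 c2"]) blast
  define D where "D r = \<bar>X1 r - X2 r\<bar> + \<bar>P1 r - P2 r\<bar>" for r
  have along: "\<bar>F (X1 r) (P1 r) - F (X2 r) (P2 r)\<bar> \<le> L * D r \<and>
      \<bar>G (X1 r) (P1 r) - G (X2 r) (P2 r)\<bar> \<le> L * D r" if "r \<in> {a..b}" for r
    unfolding D_def by (rule L) (use in_S c1 c2 that in \<open>auto simp: le_max_iff_disj\<close>)
  have "D s = 0"
  proof (rule vanishes_if_growth_bounded[where L = "2 * L", OF _ _ _ _ _ s])
    show "continuous_on {a..b} D"
      using sol1 sol2 unfolding D_def planar_solution_def by (intro continuous_intros) auto
    show "D a = 0" "0 \<le> 2 * L" using init \<open>0 \<le> L\<close> by (simp_all add: D_def)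
    show "0 \<le> D r" for r by (simp add: D_def)
    fix \<sigma> s1 M
    assume \<sigma>: "a \<le> \<sigma>" "\<sigma> \<le> s1" "s1 \<le> b" "D \<sigma> = 0" and M: "\<forall>r\<in>{\<sigma>..s1}. D r \<le> M"
    have "D \<sigma> \<le> M" using M \<sigma>(2) by simp
    with \<sigma>(4) \<open>0 \<le> L\<close> have "0 \<le> L * M" by simp
    have "D s1 \<le> 2 * (L * M) * (s1 - \<sigma>)"
      unfolding D_def
    proof (rule planar_solutions_divergence_bound[OF planar_solution_subinterval[OF sol1 \<sigma>(1,3)]
          planar_solution_subinterval[OF sol2 \<sigma>(1,3)] \<sigma>(2) _ _ \<open>0 \<le> L * M\<close>])
      show "X1 \<sigma> = X2 \<sigma>" "P1 \<sigma> = P2 \<sigma>" using \<open>D \<sigma> = 0\<close> by (simp_all add: D_def add_nonneg_eq_0_iff)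
      fix z assume z: "z \<in> {\<sigma><..<s1}"
      then have "L * D z \<le> L * M" using M \<open>0 \<le> L\<close> by (auto intro: mult_left_mono)
      moreover have "\<bar>F (X1 z) (P1 z) - F (X2 z) (P2 z)\<bar> \<le> L * D z"
        "\<bar>G (X1 z) (P1 z) - G (X2 z) (P2 z)\<bar> \<le> L * D z" using along z \<sigma> by auto
      ultimately show "\<bar>F (X1 z) (P1 z) - F (X2 z) (P2 z)\<bar> \<le> L * M \<and>
          \<bar>G (X1 z) (P1 z) - G (X2 z) (P2 z)\<bar> \<le> L * M" by linarith
    qed
    then show "D s1 \<le> 2 * L * (s1 - \<sigma>) * M" by (simp add: algebra_simps)
  qed
  then show ?thesis by (simp add: D_def add_nonneg_eq_0_iff)
qed

text \<open>Outside the quadrant \<open>[y, \<infinity>) \<times> [q, \<infinity>)\<close> the velocity is compared with that at the nearest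
  point of the quadrant, where it points inwards.\<close>
lemma quadrant_inward_velocity:
  fixes F G :: "real \<Rightarrow> real \<Rightarrow> real" and x p y q :: real
  assumes L: "\<And>x1 x2 p1 p2. x1 \<in> S \<Longrightarrow> x2 \<in> S \<Longrightarrow>
      \<bar>x1\<bar> \<le> c \<Longrightarrow> \<bar>x2\<bar> \<le> c \<Longrightarrow> \<bar>p1\<bar> \<le> c \<Longrightarrow> \<bar>p2\<bar> \<le> c \<Longrightarrow>
      \<bar>F x1 p1 - F x2 p2\<bar> \<le> L * (\<bar>x1 - x2\<bar> + \<bar>p1 - p2\<bar>) \<and>
      \<bar>G x1 p1 - G x2 p2\<bar> \<le> L * (\<bar>x1 - x2\<bar> + \<bar>p1 - p2\<bar>)"
    and y: "y \<in> S" "\<bar>y\<bar> \<le> c" "\<bar>q\<bar> \<le> c"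
    and F_y: "\<And>p. q \<le> p \<Longrightarrow> 0 \<le> F y p" and G_q: "\<And>x. x \<in> S \<Longrightarrow> y \<le> x \<Longrightarrow> 0 \<le> G x q"
    and x: "x \<in> S" "\<bar>x\<bar> \<le> c" "\<bar>p\<bar> \<le> c"
  shows "x < y \<Longrightarrow> - (L * (max 0 (q - p) + max 0 (y - x))) \<le> F x p"
    and "p < q \<Longrightarrow> - (L * (max 0 (q - p) + max 0 (y - x))) \<le> G x p"
proof -
  assume "x < y"
  then have d: "max 0 (q - p) + max 0 (y - x) = \<bar>y - x\<bar> + \<bar>max p q - p\<bar>" by (auto simp: max_def abs_if)
  have "\<bar>F y (max p q) - F x p\<bar> \<le> L * (max 0 (q - p) + max 0 (y - x))"
    unfolding d using L[of y x "max p q" p] y x by (auto simp: max_def)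
  moreover have "0 \<le> F y (max p q)" using F_y by simp
  ultimately show "- (L * (max 0 (q - p) + max 0 (y - x))) \<le> F x p" by linarith
next
  assume "p < q"
  then have d: "max 0 (q - p) + max 0 (y - x) = \<bar>max x y - x\<bar> + \<bar>q - p\<bar>" by (auto simp: max_def abs_if)
  have "\<bar>G (max x y) q - G x p\<bar> \<le> L * (max 0 (q - p) + max 0 (y - x))"
    unfolding d using L[of "max x y" x q p] y x by (auto simp: max_def)
  moreover have "0 \<le> G (max x y) q" using G_q x(1) y(1) by (simp add: max_def)
  ultimately show "- (L * (max 0 (q - p) + max 0 (y - x))) \<le> G x p" by linarith
qed

lemma planar_solution_deficit_bound:
  assumes sol: "planar_solution F G \<sigma> s X P" and "\<sigma> \<le> s" "y \<le> X \<sigma>" "q \<le> P \<sigma>" "0 \<le> K"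
    and F_lower: "\<And>z. z \<in> {\<sigma><..<s} \<Longrightarrow> X z < y \<Longrightarrow> - K \<le> F (X z) (P z)"
    and G_lower: "\<And>z. z \<in> {\<sigma><..<s} \<Longrightarrow> P z < q \<Longrightarrow> - K \<le> G (X z) (P z)"
  shows "max 0 (q - P s) + max 0 (y - X s) \<le> 2 * K * (s - \<sigma>)"
proof -
  have "- K * (s - \<sigma>) \<le> P s - q"
  proof (rule deficit_growth_bound[where f = "\<lambda>z. P z - q" and f' = "\<lambda>z. G (X z) (P z)"])
    show "continuous_on {\<sigma>..s} (\<lambda>z. P z - q)"
      using sol unfolding planar_solution_def by (intro continuous_intros) auto
    show "((\<lambda>z. P z - q) has_real_derivative G (X z) (P z)) (at z)" if "\<sigma> < z" "z < s" for z
    proof -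
      have "(P has_real_derivative G (X z) (P z)) (at z)"
        using sol that unfolding planar_solution_def by auto
      from DERIV_diff[OF this DERIV_const[of q]] show ?thesis by simp
    qed
  qed (use assms in auto)
  moreover have "- K * (s - \<sigma>) \<le> X s - y"
  proof (rule deficit_growth_bound[where f = "\<lambda>z. X z - y" and f' = "\<lambda>z. F (X z) (P z)"])
    show "continuous_on {\<sigma>..s} (\<lambda>z. X z - y)"
      using sol unfolding planar_solution_def by (intro continuous_intros) auto
    show "((\<lambda>z. X z - y) has_real_derivative F (X z) (P z)) (at z)" if "\<sigma> < z" "z < s" for z
    proof -
      have "(X has_real_derivative F (X z) (P z)) (at z)"
        using sol that unfolding planar_solution_def by auto
      from DERIV_diff[OF this DERIV_const[of y]] show ?thesis by simp
    qed
  qed (use assms in auto)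
  moreover have "0 \<le> K * (s - \<sigma>)" using assms(2,5) by simp
  ultimately show ?thesis by (simp add: max_def)
qed

lemma planar_quadrant_invariant:
  assumes sol: "planar_solution F G a b X P" and in_S: "\<And>s. s \<in> {a..b} \<Longrightarrow> X s \<in> S"
    and lip: "lipschitz_on_bounded_sets S F" "lipschitz_on_bounded_sets S G"
    and "y \<in> S" and F_y: "\<And>p. q \<le> p \<Longrightarrow> 0 \<le> F y p" and G_q: "\<And>x. x \<in> S \<Longrightarrow> y \<le> x \<Longrightarrow> 0 \<le> G x q"
    and start: "y \<le> X a" "q \<le> P a" and s: "s \<in> {a..b}"
  shows "y \<le> X s \<and> q \<le> P s"
proof -
  obtain c0 where c0: "\<And>s. s \<in> {a..b} \<Longrightarrow> \<bar>X s\<bar> \<le> c0 \<and> \<bar>P s\<bar> \<le> c0"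
    using planar_solution_bounded[OF sol] by blast
  define c where "c = max c0 (max \<bar>y\<bar> \<bar>q\<bar>)"
  obtain L where "0 \<le> L" and L: "\<And>x1 x2 p1 p2. x1 \<in> S \<Longrightarrow> x2 \<in> S \<Longrightarrow>
      \<bar>x1\<bar> \<le> c \<Longrightarrow> \<bar>x2\<bar> \<le> c \<Longrightarrow> \<bar>p1\<bar> \<le> c \<Longrightarrow> \<bar>p2\<bar> \<le> c \<Longrightarrow>
      \<bar>F x1 p1 - F x2 p2\<bar> \<le> L * (\<bar>x1 - x2\<bar> + \<bar>p1 - p2\<bar>) \<and>
      \<bar>G x1 p1 - G x2 p2\<bar> \<le> L * (\<bar>x1 - x2\<bar> + \<bar>p1 - p2\<bar>)"
    using lip by (rule lipschitz_on_bounded_sets_common_constant[where c = c]) blast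
  define D where "D r = max 0 (q - P r) + max 0 (y - X r)" for r
  have "\<bar>y\<bar> \<le> c" "\<bar>q\<bar> \<le> c" by (simp_all add: c_def le_max_iff_disj)
  have bounded: "\<bar>X r\<bar> \<le> c" "\<bar>P r\<bar> \<le> c" if "r \<in> {a..b}" for r
    using c0[OF that] by (simp_all add: c_def le_max_iff_disj)
  have inward: "X r < y \<Longrightarrow> - (L * D r) \<le> F (X r) (P r)" "P r < q \<Longrightarrow> - (L * D r) \<le> G (X r) (P r)"
    if "r \<in> {a..b}" for r
    using quadrant_inward_velocity[OF L \<open>y \<in> S\<close> \<open>\<bar>y\<bar> \<le> c\<close> \<open>\<bar>q\<bar> \<le> c\<close> F_y G_q
        in_S[OF that] bounded[OF that]]
    unfolding D_def by blast+
  have "D s = 0"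
  proof (rule vanishes_if_growth_bounded[where L = "2 * L", OF _ _ _ _ _ s])
    show "continuous_on {a..b} D"
      using sol unfolding D_def planar_solution_def by (intro continuous_intros) auto
    show "D a = 0" "0 \<le> 2 * L" using start \<open>0 \<le> L\<close> by (simp_all add: D_def)
    show "0 \<le> D r" for r by (simp add: D_def)
    fix \<sigma> s1 M
    assume \<sigma>: "a \<le> \<sigma>" "\<sigma> \<le> s1" "s1 \<le> b" "D \<sigma> = 0" and M: "\<forall>r\<in>{\<sigma>..s1}. D r \<le> M"
    have "D \<sigma> \<le> M" using M \<sigma>(2) by simp
    with \<sigma>(4) \<open>0 \<le> L\<close> have "0 \<le> L * M" by simp
    have LD: "L * D z \<le> L * M" if "z \<in> {\<sigma><..<s1}" for z
      using M that \<open>0 \<le> L\<close> by (auto intro: mult_left_mono)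
    have "D s1 \<le> 2 * (L * M) * (s1 - \<sigma>)"
      unfolding D_def
    proof (rule planar_solution_deficit_bound[OF planar_solution_subinterval[OF sol \<sigma>(1,3)] \<sigma>(2) _ _
          \<open>0 \<le> L * M\<close>])
      show "y \<le> X \<sigma>" "q \<le> P \<sigma>" using \<open>D \<sigma> = 0\<close> unfolding D_def by (simp_all add: max_def split: if_splits)
      show "- (L * M) \<le> F (X z) (P z)" if "z \<in> {\<sigma><..<s1}" "X z < y" for z
        using inward(1)[of z] LD[OF that(1)] that \<sigma> by force
      show "- (L * M) \<le> G (X z) (P z)" if "z \<in> {\<sigma><..<s1}" "P z < q" for z
        using inward(2)[of z] LD[OF that(1)] that \<sigma> by force
    qed
    then show "D s1 \<le> 2 * L * (s1 - \<sigma>) * M" by (simp add: algebra_simps)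
  qed
  then show ?thesis unfolding D_def by (simp add: max_def split: if_splits)
qed

text \<open>The quadrant \<open>[y, \<infinity>) \<times> [q, \<infinity>)\<close> is forward invariant (by \<open>planar_quadrant_invariant\<close>),
  and to the right of \<open>w\<close> every trajectory below the level \<open>q\<close> moves to the left.\<close>
definition upper_trap :: "real set \<Rightarrow> (real \<Rightarrow> real \<Rightarrow> real) \<Rightarrow> (real \<Rightarrow> real \<Rightarrow> real)
    \<Rightarrow> real \<Rightarrow> real \<Rightarrow> real \<Rightarrow> bool" where
  "upper_trap S F G y q w \<longleftrightarrow> y \<in> S \<and> (\<forall>p\<ge>q. 0 \<le> F y p) \<and> (\<forall>x\<in>S. y \<le> x \<longrightarrow> 0 \<le> G x q) \<and>
     (\<forall>x\<in>S. w \<le> x \<longrightarrow> (\<forall>p<q. F x p < 0))"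

text \<open>At a time where \<open>X\<close> is maximal and at least \<open>v\<close>, \<open>X' = 0\<close> forces \<open>P \<ge> q\<close>; the trajectory
  is then caught in the invariant quadrant and cannot come back below \<open>u\<close>.\<close>
lemma planar_solution_stays_below:
  assumes sol: "planar_solution F G a b X P" and "a \<le> b" and in_S: "\<And>s. s \<in> {a..b} \<Longrightarrow> X s \<in> S"
    and lip: "lipschitz_on_bounded_sets S F" "lipschitz_on_bounded_sets S G"
    and trap: "upper_trap S F G y q w" and "u < y" "y \<le> v" "w \<le> v"
    and "X a < v" "X b < u" and s: "s \<in> {a..b}"
  shows "X s < v"
proof (rule ccontr)
  assume "\<not> X s < v"
  obtain \<tau> where \<tau>: "\<tau> \<in> {a..b}" and max: "\<forall>r\<in>{a..b}. X r \<le> X \<tau>"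
    using continuous_attains_sup[of "{a..b}" X] sol \<open>a \<le> b\<close> unfolding planar_solution_def by auto
  have "v \<le> X \<tau>" using max s \<open>\<not> X s < v\<close> by force
  then have "\<tau> \<in> {a<..<b}" using \<tau> \<open>X a < v\<close> \<open>X b < u\<close> \<open>u < y\<close> \<open>y \<le> v\<close> by (cases "\<tau> = a \<or> \<tau> = b") auto
  then have "(X has_real_derivative F (X \<tau>) (P \<tau>)) (at \<tau>)" and "0 < min (\<tau> - a) (b - \<tau>)"
    using sol unfolding planar_solution_def by auto
  moreover have "\<forall>r. \<bar>\<tau> - r\<bar> < min (\<tau> - a) (b - \<tau>) \<longrightarrow> X r \<le> X \<tau>"
    using max by (auto simp: abs_less_iff)
  ultimately have "F (X \<tau>) (P \<tau>) = 0" by (rule DERIV_local_max)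
  moreover have "\<forall>p<q. F (X \<tau>) p < 0"
    using trap in_S[OF \<tau>] \<open>w \<le> v\<close> \<open>v \<le> X \<tau>\<close> unfolding upper_trap_def by auto
  ultimately have "q \<le> P \<tau>" by (cases "P \<tau> < q") auto
  have "y \<le> X b \<and> q \<le> P b"
  proof (rule planar_quadrant_invariant[OF planar_solution_subinterval[OF sol, of \<tau> b] _ lip])
    show "y \<le> X \<tau>" using \<open>y \<le> v\<close> \<open>v \<le> X \<tau>\<close> by simp
  qed (use trap \<tau> \<open>q \<le> P \<tau>\<close> \<open>a \<le> b\<close> in_S in \<open>auto simp: upper_trap_def\<close>)
  with \<open>X b < u\<close> \<open>u < y\<close> show False by simp
qed

section \<open>The state space\<close>

lemma interior_Kset: "interior (Kset b) = (if b then {-1<..<1} else UNIV)"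
  by (auto simp: Kset_def)

lemma uminus_in_Kset: "x \<in> Kset b \<Longrightarrow> - x \<in> Kset b"
  by (auto simp: Kset_def)

lemma uminus_in_interior_Kset: "x \<in> interior (Kset b) \<Longrightarrow> - x \<in> interior (Kset b)"
  by (auto simp: interior_Kset split: if_splits)

lemma Kset_frontier: "x \<in> Kset b \<Longrightarrow> x \<notin> interior (Kset b) \<Longrightarrow> b \<and> (x = 1 \<or> x = -1)"
  by (auto simp: Kset_def interior_Kset split: if_splits)

lemma interior_Kset_upper_bound:
  assumes "finite A" "A \<subseteq> interior (Kset b)"
  obtains v where "v \<in> interior (Kset b)" "\<And>a. a \<in> A \<Longrightarrow> a < v"
proof -
  define m where "m = Max (insert 0 A)"
  have "m \<in> insert 0 A" unfolding m_def by (rule Max_in) (use assms(1) in auto)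
  have le_m: "\<And>a. a \<in> A \<Longrightarrow> a \<le> m" using assms(1) unfolding m_def by simp
  have "m \<in> interior (Kset b)" using \<open>m \<in> insert 0 A\<close> assms(2) by (auto simp: interior_Kset)
  show thesis
    by (rule that[of "if b then (m + 1) / 2 else m + 1"])
      (use \<open>m \<in> interior (Kset b)\<close> le_m in \<open>fastforce simp: interior_Kset split: if_splits\<close>)+
qed

lemma eventually_to_dplus_greater: "u \<in> interior (Kset b) \<Longrightarrow> eventually (\<lambda>x. u < x) (to_dplus b)"
  by (cases b) (auto simp: to_dplus_def interior_Kset eventually_at_left_field intro: exI[of _ u])

lemma eventually_to_dplus_interior:
  assumes "eventually P (to_dplus b)"
  obtains w where "w \<in> interior (Kset b)" "\<And>x. x \<in> interior (Kset b) \<Longrightarrow> w \<le> x \<Longrightarrow> P x"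
proof (cases b)
  case True
  then obtain c where "c < 1" "\<And>x. c < x \<Longrightarrow> x < 1 \<Longrightarrow> P x"
    using assms by (auto simp: to_dplus_def eventually_at_left_field)
  then show thesis
    by (intro that[of "max 0 ((c + 1) / 2)"]) (use True in \<open>auto simp: interior_Kset\<close>)
next
  case False
  then obtain N where "\<And>x. N \<le> x \<Longrightarrow> P x"
    using assms by (auto simp: to_dplus_def eventually_at_top_linorder)
  then show thesis by (intro that[of N]) (use False in \<open>auto simp: interior_Kset\<close>)
qed

lemma filterlim_uminus_to_dplus: "filterlim uminus (to_dplus b) (to_dminus b)"
proof (cases b)
  case True
  then show ?thesis
    unfolding to_dplus_def to_dminus_def filterlim_def using at_left_minus[of 1] by simp
qed (simp add: to_dplus_def to_dminus_def filterlim_uminus_at_top_at_bot)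

lemma filterlim_uminus_to_dminus: "filterlim uminus (to_dminus b) (to_dplus b)"
proof (cases b)
  case True
  then show ?thesis
    unfolding to_dplus_def to_dminus_def filterlim_def using at_right_minus[of "-1"] by simp
qed (simp add: to_dplus_def to_dminus_def filterlim_uminus_at_bot_at_top)

lemma continuous_on_Icc_right_endpoint_le:
  fixes f :: "real \<Rightarrow> real"
  assumes "continuous_on {a..e} f" "a < e" "\<And>x. a \<le> x \<Longrightarrow> x < e \<Longrightarrow> f x \<le> c"
  shows "f e \<le> c"
proof (rule tendsto_upperbound)
  show "(f \<longlongrightarrow> f e) (at_left e)" using continuous_on_Icc_at_leftD[OF assms(1,2)] .
  show "\<forall>\<^sub>F x in at_left e. f x \<le> c"
    unfolding eventually_at_left_field using assms(2,3) by (intro exI[of _ a]) auto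
qed simp

text \<open>At the endpoint \<open>1\<close> of \<open>K = [-1, 1]\<close> the sign passes to the limit as \<open>F 1 p \<le> 0\<close>, and strict
  monotonicity in \<open>p\<close> makes it strict again.\<close>
lemma negative_up_to_upper_end:
  fixes F :: "real \<Rightarrow> real \<Rightarrow> real"
  assumes mono: "\<And>x. x \<in> Kset b \<Longrightarrow> strict_mono (F x)"
    and cont: "\<And>p. continuous_on (Kset b) (\<lambda>x. F x p)"
    and w: "w \<in> interior (Kset b)"
    and neg: "\<And>x p. x \<in> interior (Kset b) \<Longrightarrow> w \<le> x \<Longrightarrow> p < q \<Longrightarrow> F x p < 0"
    and x: "x \<in> Kset b" "w \<le> x" and "p < q"
  shows "F x p < 0"
proof (cases "x \<in> interior (Kset b)")
  case True
  with neg x \<open>p < q\<close> show ?thesis by blast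
next
  case False
  then have "b" "x = 1 \<or> x = -1" using Kset_frontier x(1) by blast+
  with w x(2) have "x = 1" "w < 1" by (auto simp: interior_Kset)
  define p' where "p' = (p + q) / 2"
  have "F 1 p' \<le> 0"
  proof (rule continuous_on_Icc_right_endpoint_le[where f = "\<lambda>z. F z p'", OF _ \<open>w < 1\<close>])
    show "continuous_on {w..1} (\<lambda>x. F x p')"
      by (rule continuous_on_subset[OF cont]) (use \<open>b\<close> w in \<open>auto simp: Kset_def interior_Kset\<close>)
    show "F z p' \<le> 0" if "w \<le> z" "z < 1" for z
      using neg[of z p'] that w \<open>b\<close> \<open>p < q\<close> by (auto simp: interior_Kset p'_def)
  qed
  moreover have "F x p < F x p'" using mono[OF x(1)] \<open>p < q\<close> by (auto intro: strict_monoD simp: p'_def)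
  ultimately show ?thesis using \<open>x = 1\<close> by simp
qed

lemma upper_trap_exists:
  assumes mono: "\<And>x. x \<in> Kset b \<Longrightarrow> strict_mono (F x)"
    and zero: "\<And>x. x \<in> interior (Kset b) \<Longrightarrow> F x (m x) = 0"
    and m_lim: "filterlim m at_top (to_dplus b)"
    and cont: "\<And>p. continuous_on (Kset b) (\<lambda>x. F x p)"
    and y_lim: "filterlim y (to_dplus b) sequentially" and y_int: "\<And>n. y n \<in> interior (Kset b)"
    and F_y: "\<And>n p. q n \<le> p \<Longrightarrow> 0 \<le> F (y n) p"
    and G_q: "\<And>n x. x \<in> Kset b \<Longrightarrow> y n \<le> x \<Longrightarrow> 0 \<le> G x (q n)"
    and u: "u \<in> interior (Kset b)"
  obtains y0 q0 w where "u < y0" "y0 \<in> interior (Kset b)" "w \<in> interior (Kset b)"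
    "upper_trap (Kset b) F G y0 q0 w"
proof -
  have "eventually (\<lambda>n. u < y n) sequentially"
    using y_lim eventually_to_dplus_greater[OF u] unfolding filterlim_iff by blast
  then obtain n where "u < y n" by (auto simp: eventually_sequentially)
  have "eventually (\<lambda>x. q n \<le> m x) (to_dplus b)"
    using m_lim unfolding filterlim_at_top by blast
  then obtain w where w: "w \<in> interior (Kset b)"
    and q_le_m: "\<And>x. x \<in> interior (Kset b) \<Longrightarrow> w \<le> x \<Longrightarrow> q n \<le> m x"
    by (rule eventually_to_dplus_interior) blast
  have neg_interior: "F x p < 0" if "x \<in> interior (Kset b)" "w \<le> x" "p < q n" for x p
  proof -
    have "x \<in> Kset b" using that(1) interior_subset by blast
    moreover have "p < m x" using q_le_m[OF that(1,2)] that(3) by simp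
    ultimately have "F x p < F x (m x)" using mono by (blast intro: strict_monoD)
    with zero that(1) show ?thesis by simp
  qed
  have "y n \<in> Kset b" using y_int interior_subset by blast
  moreover have "F x p < 0" if "x \<in> Kset b" "w \<le> x" "p < q n" for x p
    using negative_up_to_upper_end[OF mono cont w neg_interior that] .
  ultimately show thesis
    by (intro that[OF \<open>u < y n\<close> y_int w]) (use F_y G_q in \<open>auto simp: upper_trap_def\<close>)
qed

section \<open>Regularity of the Hamiltonian\<close>

lemma has_derivative_partials:
  fixes f :: "real \<Rightarrow> real \<Rightarrow> real"
  assumes "((\<lambda>(x, p). f x p) has_derivative D) (at (x, p))"
  shows "(f x has_real_derivative D (0, 1)) (at p)"
    and "((\<lambda>y. f y p) has_real_derivative D (1, 0)) (at x)"
proof -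
  have "linear D" using assms by (rule has_derivative_linear)
  then have scale: "D (0, h) = D (0, 1) * h" "D (h, 0) = D (1, 0) * h" for h
    using linear_scale[of D h "(0, 1)"] linear_scale[of D h "(1, 0)"] by (simp_all add: mult.commute)
  have "((\<lambda>q. (x, q)) has_derivative (\<lambda>h. (0, h))) (at p)"
    by (auto intro!: derivative_eq_intros)
  from has_derivative_compose[OF this assms]
  have "((\<lambda>q. (\<lambda>(x, p). f x p) (x, q)) has_derivative (\<lambda>h. D (0, h))) (at p)" .
  moreover have "(\<lambda>h. D (0, h)) = (\<lambda>h. D (0, 1) * h)" by (rule ext, rule scale(1))
  ultimately show "(f x has_real_derivative D (0, 1)) (at p)"
    by (simp add: has_field_derivative_def)
  have "((\<lambda>y. (y, p)) has_derivative (\<lambda>h. (h, 0))) (at x)"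
    by (auto intro!: derivative_eq_intros)
  from has_derivative_compose[OF this assms]
  have "((\<lambda>y. (\<lambda>(x, p). f x p) (y, p)) has_derivative (\<lambda>h. D (h, 0))) (at x)" .
  moreover have "(\<lambda>h. D (h, 0)) = (\<lambda>h. D (1, 0) * h)" by (rule ext, rule scale(2))
  ultimately show "((\<lambda>y. f y p) has_real_derivative D (1, 0)) (at x)"
    by (simp add: has_field_derivative_def)
qed

lemma condH1_derivatives:
  assumes "condH1 b H"
  obtains U and Df :: "real \<times> real \<Rightarrow> (real \<times> real) \<Rightarrow>\<^sub>L real"
    and D2f :: "real \<times> real \<Rightarrow> (real \<times> real) \<Rightarrow>\<^sub>L (real \<times> real) \<Rightarrow>\<^sub>L real"
  where "Kset b \<times> UNIV \<subseteq> U"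
    and "\<And>z. z \<in> U \<Longrightarrow> (Df has_derivative blinfun_apply (D2f z)) (at z)"
    and "continuous_on U D2f"
    and "\<And>x p. x \<in> Kset b \<Longrightarrow> (H x has_real_derivative blinfun_apply (Df (x, p)) (0, 1)) (at p)"
    and "\<And>x p. x \<in> Kset b \<Longrightarrow> dHp H x p = blinfun_apply (Df (x, p)) (0, 1) \<and> dHx H x p = blinfun_apply (Df (x, p)) (1, 0)"
proof -
  obtain U where U: "Kset b \<times> UNIV \<subseteq> U" "C2_on (\<lambda>(x, p). H x p) U"
  proof (cases b)
    case True
    then obtain \<epsilon> where "0 < \<epsilon>" "C2_on (\<lambda>(x, p). H x p) ({-1-\<epsilon><..<1+\<epsilon>} \<times> UNIV)"
      using assms by (auto simp: condH1_def)
    with True show thesis by (intro that[of "{-1-\<epsilon><..<1+\<epsilon>} \<times> UNIV"]) (auto simp: Kset_def)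
  next
    case False
    with assms show thesis by (intro that[of UNIV]) (auto simp: condH1_def)
  qed
  then obtain Df :: "real \<times> real \<Rightarrow> (real \<times> real) \<Rightarrow>\<^sub>L real"
    and D2f :: "real \<times> real \<Rightarrow> (real \<times> real) \<Rightarrow>\<^sub>L (real \<times> real) \<Rightarrow>\<^sub>L real"
    where D1: "\<forall>z\<in>U. ((\<lambda>(x, p). H x p) has_derivative blinfun_apply (Df z)) (at z)"
      and D2: "\<forall>z\<in>U. (Df has_derivative blinfun_apply (D2f z)) (at z)" and "continuous_on U D2f"
    unfolding C2_on_def by blast
  have partials: "(H x has_real_derivative blinfun_apply (Df (x, p)) (0, 1)) (at p)"
    "((\<lambda>y. H y p) has_real_derivative blinfun_apply (Df (x, p)) (1, 0)) (at x)" if "x \<in> Kset b" for x p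
    using has_derivative_partials[of H "blinfun_apply (Df (x, p))" x p] D1 U(1) that by auto
  show thesis
  proof (rule that[OF U(1) _ \<open>continuous_on U D2f\<close> partials(1)])
    show "dHp H x p = blinfun_apply (Df (x, p)) (0, 1) \<and> dHx H x p = blinfun_apply (Df (x, p)) (1, 0)" if "x \<in> Kset b" for x p
      using partials[OF that] unfolding dHp_def dHx_def by (auto intro: DERIV_imp_deriv)
  qed (use D2 in auto)
qed

lemma condH1_has_derivative_dHp:
  "condH1 b H \<Longrightarrow> x \<in> Kset b \<Longrightarrow> (H x has_real_derivative dHp H x p) (at p)"
  by (erule condH1_derivatives) auto

lemma bounded_second_derivative_lipschitz:
  fixes Df :: "'a::euclidean_space \<Rightarrow> 'a \<Rightarrow>\<^sub>L 'b::real_normed_vector"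
  assumes "\<And>z. z \<in> U \<Longrightarrow> (Df has_derivative blinfun_apply (D2f z)) (at z)"
    and "continuous_on U D2f" and "compact R" "convex R" "R \<subseteq> U"
  obtains L where "0 \<le> L" "\<And>z1 z2. z1 \<in> R \<Longrightarrow> z2 \<in> R \<Longrightarrow> norm (Df z1 - Df z2) \<le> L * norm (z1 - z2)"
proof -
  have "compact (D2f ` R)"
    using assms by (intro compact_continuous_image continuous_on_subset[OF assms(2)]) auto
  then obtain B where B: "\<forall>y\<in>D2f ` R. norm y \<le> B"
    using compact_imp_bounded bounded_iff by blast
  show thesis
  proof (rule that[of "max B 0"])
    fix z1 z2 assume "z1 \<in> R" "z2 \<in> R"
    show "norm (Df z1 - Df z2) \<le> max B 0 * norm (z1 - z2)"
    proof (rule differentiable_bound[where f' = "\<lambda>z. blinfun_apply (D2f z)"])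
      show "(Df has_derivative blinfun_apply (D2f z)) (at z within R)" if "z \<in> R" for z
        using assms(1,5) that by (auto intro: has_derivative_at_withinI)
      show "onorm (blinfun_apply (D2f z)) \<le> max B 0" if "z \<in> R" for z
        using B that by (auto simp: norm_blinfun.rep_eq[symmetric])
    qed (use assms \<open>z1 \<in> R\<close> \<open>z2 \<in> R\<close> in auto)
  qed simp
qed

lemma condH1_lipschitz:
  assumes "condH1 b H"
  shows "lipschitz_on_bounded_sets (Kset b) (dHp H)" and "lipschitz_on_bounded_sets (Kset b) (dHx H)"
proof -
  obtain U and Df :: "real \<times> real \<Rightarrow> (real \<times> real) \<Rightarrow>\<^sub>L real" and D2f where U: "Kset b \<times> UNIV \<subseteq> U"
    and D2: "\<And>z. z \<in> U \<Longrightarrow> (Df has_derivative blinfun_apply (D2f z)) (at z)" and "continuous_on U D2f"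
    and Df: "\<And>x p. x \<in> Kset b \<Longrightarrow> dHp H x p = blinfun_apply (Df (x, p)) (0, 1) \<and> dHx H x p = blinfun_apply (Df (x, p)) (1, 0)"
    by (rule condH1_derivatives[OF assms]) blast
  have component: "lipschitz_on_bounded_sets (Kset b) (\<lambda>x p. blinfun_apply (Df (x, p)) v)" if "norm v = 1" for v
    unfolding lipschitz_on_bounded_sets_def
  proof
    fix c
    define R where "R = ({-c..c} \<inter> Kset b) \<times> {-c..c}"
    have "compact R" "convex R" "R \<subseteq> U"
      using U unfolding R_def by (auto intro!: compact_Times convex_Times compact_Int_closed convex_Int
          simp: Kset_def)
    then obtain L where "0 \<le> L" and L: "\<And>z1 z2. z1 \<in> R \<Longrightarrow> z2 \<in> R \<Longrightarrow> norm (Df z1 - Df z2) \<le> L * norm (z1 - z2)"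
      using bounded_second_derivative_lipschitz[OF D2 \<open>continuous_on U D2f\<close>] by blast
    have "\<bar>blinfun_apply (Df (x1, p1)) v - blinfun_apply (Df (x2, p2)) v\<bar> \<le> L * (\<bar>x1 - x2\<bar> + \<bar>p1 - p2\<bar>)"
      if "x1 \<in> Kset b" "x2 \<in> Kset b" "\<bar>x1\<bar> \<le> c" "\<bar>x2\<bar> \<le> c" "\<bar>p1\<bar> \<le> c" "\<bar>p2\<bar> \<le> c" for x1 x2 p1 p2
    proof -
      have "\<bar>blinfun_apply (Df (x1, p1)) v - blinfun_apply (Df (x2, p2)) v\<bar> = norm (blinfun_apply (Df (x1, p1) - Df (x2, p2)) v)"
        by (simp add: blinfun.diff_left)
      also have "\<dots> \<le> norm (Df (x1, p1) - Df (x2, p2))"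
        using norm_blinfun[of "Df (x1, p1) - Df (x2, p2)" v] \<open>norm v = 1\<close> by simp
      also have "\<dots> \<le> L * norm ((x1, p1) - (x2, p2))"
        using L[of "(x1, p1)" "(x2, p2)"] that unfolding R_def by (auto simp: abs_le_iff)
      also have "\<dots> \<le> L * (\<bar>x1 - x2\<bar> + \<bar>p1 - p2\<bar>)"
        using norm_Pair_le[of "x1 - x2" "p1 - p2"] \<open>0 \<le> L\<close> by (simp add: mult_left_mono)
      finally show ?thesis .
    qed
    with \<open>0 \<le> L\<close> show "\<exists>L\<ge>0. \<forall>x1\<in>Kset b. \<forall>x2\<in>Kset b. \<forall>p1 p2. \<bar>x1\<bar> \<le> c \<longrightarrow> \<bar>x2\<bar> \<le> c \<longrightarrow>
        \<bar>p1\<bar> \<le> c \<longrightarrow> \<bar>p2\<bar> \<le> c \<longrightarrow> \<bar>blinfun_apply (Df (x1, p1)) v - blinfun_apply (Df (x2, p2)) v\<bar> \<le> L * (\<bar>x1 - x2\<bar> + \<bar>p1 - p2\<bar>)"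
      by blast
  qed
  show "lipschitz_on_bounded_sets (Kset b) (dHp H)"
    using component[of "(0, 1)"] Df by (simp add: lipschitz_on_bounded_sets_def)
  show "lipschitz_on_bounded_sets (Kset b) (dHx H)"
    using component[of "(1, 0)"] Df by (simp add: lipschitz_on_bounded_sets_def)
qed

lemma condH1_continuous_dHp:
  assumes "condH1 b H"
  shows "continuous_on (Kset b) (\<lambda>x. dHp H x p)"
proof -
  obtain U and Df :: "real \<times> real \<Rightarrow> (real \<times> real) \<Rightarrow>\<^sub>L real" and D2f where U: "Kset b \<times> UNIV \<subseteq> U"
    and D2: "\<And>z. z \<in> U \<Longrightarrow> (Df has_derivative blinfun_apply (D2f z)) (at z)"
    and Df: "\<And>x p. x \<in> Kset b \<Longrightarrow> dHp H x p = blinfun_apply (Df (x, p)) (0, 1) \<and> dHx H x p = blinfun_apply (Df (x, p)) (1, 0)"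
    by (rule condH1_derivatives[OF assms]) blast
  have "isCont (\<lambda>q. blinfun_apply (Df (q, p)) (0, 1)) x" if "x \<in> Kset b" for x
  proof -
    have "(x, p) \<in> U" using U that by auto
    then have "isCont Df (x, p)" using D2 by (blast intro: has_derivative_continuous)
    then have "isCont (\<lambda>q. Df (q, p)) x"
      by (rule isCont_o2[where f = "\<lambda>q. (q, p)", rotated]) (intro continuous_intros)
    then show ?thesis by (rule blinfun.continuous[OF _ continuous_const])
  qed
  then have "continuous_on (Kset b) (\<lambda>x. blinfun_apply (Df (x, p)) (0, 1))"
    by (intro continuous_at_imp_continuous_on) auto
  moreover have "continuous_on (Kset b) (\<lambda>x. dHp H x p) =
      continuous_on (Kset b) (\<lambda>x. blinfun_apply (Df (x, p)) (0, 1))"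
    by (rule continuous_on_cong) (use Df in auto)
  ultimately show ?thesis by simp
qed

lemma condH1_strict_mono_dHp:
  assumes "condH1 b H" "x \<in> Kset b"
  shows "strict_mono (dHp H x)"
proof -
  obtain U and Df :: "real \<times> real \<Rightarrow> (real \<times> real) \<Rightarrow>\<^sub>L real" and D2f where U: "Kset b \<times> UNIV \<subseteq> U"
    and D2: "\<And>z. z \<in> U \<Longrightarrow> (Df has_derivative blinfun_apply (D2f z)) (at z)"
    and Df: "\<And>x p. x \<in> Kset b \<Longrightarrow> dHp H x p = blinfun_apply (Df (x, p)) (0, 1) \<and> dHx H x p = blinfun_apply (Df (x, p)) (1, 0)"
    by (rule condH1_derivatives[OF assms(1)]) blast
  have eq: "dHp H x = (\<lambda>q. blinfun_apply (Df (x, q)) (0, 1))" using Df[OF assms(2)] by auto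
  have "dHp H x differentiable (at q)" for q
  proof -
    have "((\<lambda>q. (x, q)) has_derivative (\<lambda>h. (0, h))) (at q)"
      by (auto intro!: derivative_eq_intros)
    moreover have "(x, q) \<in> U" using U assms(2) by auto
    then have "(Df has_derivative blinfun_apply (D2f (x, q))) (at (x, q))" by (rule D2)
    ultimately have "((\<lambda>q. Df (x, q)) has_derivative (\<lambda>h. blinfun_apply (D2f (x, q)) (0, h))) (at q)"
      by (rule has_derivative_compose)
    from bounded_linear.has_derivative[OF blinfun.bounded_linear_left this]
    show ?thesis unfolding eq by (rule differentiableI)
  qed
  then have deriv: "DERIV (dHp H x) q :> dHpp H x q" for q
    unfolding dHpp_def by (simp add: DERIV_deriv_iff_real_differentiable)
  have pos: "0 < dHpp H x q" for q using assms by (auto simp: condH1_def)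
  show ?thesis
  proof (rule strict_monoI)
    fix p q :: real assume "p < q"
    show "dHp H x p < dHp H x q"
      by (rule DERIV_pos_imp_increasing[OF \<open>p < q\<close>]) (use deriv pos in blast)
  qed
qed

section \<open>The Hamiltonian flow\<close>

lemma has_vector_derivative_components:
  assumes "(Y has_vector_derivative (a, c)) F"
  shows "((\<lambda>t. fst (Y t)) has_vector_derivative a) F" and "((\<lambda>t. snd (Y t)) has_vector_derivative c) F"
proof -
  from assms have "(Y has_derivative (\<lambda>h. (h *\<^sub>R a, h *\<^sub>R c))) F"
    by (simp add: has_vector_derivative_def)
  from has_derivative_fst[OF this] has_derivative_snd[OF this]
  show "((\<lambda>t. fst (Y t)) has_vector_derivative a) F" "((\<lambda>t. snd (Y t)) has_vector_derivative c) F"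
    by (simp_all add: has_vector_derivative_def)
qed

lemma ham_sol_planar_solution:
  assumes hs: "ham_sol b H x p T Y" and "s < T"
  shows "planar_solution (dHp H) (\<lambda>x p. - dHx H x p) 0 s (\<lambda>r. fst (Y r)) (\<lambda>r. snd (Y r))"
    and "\<And>r. r \<in> {0..s} \<Longrightarrow> fst (Y r) \<in> Kset b"
proof -
  have deriv: "(Y has_vector_derivative (dHp H (fst (Y r)) (snd (Y r)), - dHx H (fst (Y r)) (snd (Y r))))
      (at r within {0..<T})" and inK: "fst (Y r) \<in> Kset b" if "r \<in> {0..<T}" for r
    using hs that unfolding ham_sol_def by auto
  then show "\<And>r. r \<in> {0..s} \<Longrightarrow> fst (Y r) \<in> Kset b" using \<open>s < T\<close> by auto
  have "continuous_on {0..<T} Y"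
    unfolding continuous_on_eq_continuous_within using deriv has_vector_derivative_continuous by blast
  then have "continuous_on {0..s} Y" by (rule continuous_on_subset) (use \<open>s < T\<close> in auto)
  moreover have "((\<lambda>r. fst (Y r)) has_real_derivative dHp H (fst (Y r)) (snd (Y r))) (at r) \<and>
      ((\<lambda>r. snd (Y r)) has_real_derivative - dHx H (fst (Y r)) (snd (Y r))) (at r)" if "r \<in> {0<..<s}" for r
  proof -
    have "r \<in> {0..<T}" "at r within {0..<T} = at r"
      using that \<open>s < T\<close> by (auto intro: at_within_interior)
    with has_vector_derivative_components[OF deriv[OF \<open>r \<in> {0..<T}\<close>]] show ?thesis
      by (simp add: has_real_derivative_iff_has_vector_derivative)
  qed
  ultimately show "planar_solution (dHp H) (\<lambda>x p. - dHx H x p) 0 s (\<lambda>r. fst (Y r)) (\<lambda>r. snd (Y r))"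
    unfolding planar_solution_def by (auto intro: continuous_on_fst continuous_on_snd)
qed

lemma ham_sol_unique:
  assumes H1: "condH1 b H" and hs1: "ham_sol b H x p T1 Y1" and hs2: "ham_sol b H x p T2 Y2"
    and s: "0 \<le> s" "s < T1" "s < T2"
  shows "Y1 s = Y2 s"
proof -
  have "fst (Y1 s) = fst (Y2 s) \<and> snd (Y1 s) = snd (Y2 s)"
  proof (rule planar_solution_unique[OF ham_sol_planar_solution(1)[OF hs1 s(2)]
        ham_sol_planar_solution(1)[OF hs2 s(3)] _ condH1_lipschitz(1)[OF H1]
        lipschitz_on_bounded_sets_uminus[OF condH1_lipschitz(2)[OF H1]]])
    show "fst (Y1 r) \<in> Kset b \<and> fst (Y2 r) \<in> Kset b" if "r \<in> {0..s}" for r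
      using ham_sol_planar_solution(2)[OF hs1 s(2) that] ham_sol_planar_solution(2)[OF hs2 s(3) that] by blast
  qed (use hs1 hs2 s in \<open>auto simp: ham_sol_def\<close>)
  then show ?thesis by (simp add: prod_eq_iff)
qed

lemma Xflow_eq:
  assumes "condH1 b H" "ham_sol b H x p T Y" "0 \<le> s" "s < T"
  shows "Xflow b H x p s = fst (Y s)"
proof -
  have "flow b H x p s = Y s"
    unfolding flow_def
  proof (rule the_equality)
    show "\<exists>T' Y'. ham_sol b H x p T' Y' \<and> s < T' \<and> Y' s = Y s" using assms by blast
    show "z = Y s" if "\<exists>T' Y'. ham_sol b H x p T' Y' \<and> s < T' \<and> Y' s = z" for z
      using that ham_sol_unique[OF assms(1) _ assms(2,3) _ assms(4)] by blast
  qed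
  then show ?thesis by (simp add: Xflow_def)
qed

lemma condH_global_min:
  assumes "condH b H" "x \<in> interior (Kset b)"
  obtains m where "\<And>p. H x m \<le> H x p"
proof -
  have "x \<in> Kset b" using assms(2) interior_subset by blast
  have "filterlim (\<lambda>p. (INF y\<in>{x}. H y p) / \<bar>p\<bar>) at_top at_infinity"
    using assms unfolding condH_def condH3_def by auto
  then have "eventually (\<lambda>p. 1 \<le> H x p / \<bar>p\<bar>) at_infinity" by (simp add: filterlim_at_top)
  then obtain R where R: "\<And>p. R \<le> norm p \<Longrightarrow> 1 \<le> H x p / \<bar>p\<bar>" by (auto simp: eventually_at_infinity)
  define R' where "R' = max R 1"
  have positive: "0 < H x p" if "R' \<le> \<bar>p\<bar>" for p
  proof -
    have "0 < \<bar>p\<bar>" "1 \<le> H x p / \<bar>p\<bar>" using R[of p] that by (auto simp: R'_def)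
    then show ?thesis by (simp add: le_divide_eq)
  qed
  have cont: "continuous_on {-R'..R'} (H x)"
    using condH1_has_derivative_dHp[of b H x] assms(1) \<open>x \<in> Kset b\<close>
    by (intro continuous_at_imp_continuous_on) (auto simp: condH_def intro: DERIV_isCont)
  have "{-R'..R'} \<noteq> {}" by (simp add: R'_def)
  then obtain m where "m \<in> {-R'..R'}" and min: "\<forall>p\<in>{-R'..R'}. H x m \<le> H x p"
    using continuous_attains_inf[OF compact_Icc _ cont] by blast
  have "H x m \<le> H x 0" using min by (simp add: R'_def)
  also have "H x 0 = 0" using assms(1) \<open>x \<in> Kset b\<close> by (simp add: condH_def condH0_def)
  finally have "H x m \<le> 0" .
  show thesis
  proof (rule that)
    show "H x m \<le> H x p" for p
    proof (cases "R' \<le> \<bar>p\<bar>")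
      case False
      then have "p \<in> {-R'..R'}" by (auto simp: abs_if split: if_splits)
      with min show ?thesis by blast
    qed (use positive \<open>H x m \<le> 0\<close> in force)
  qed
qed

lemma condH_argminp_critical:
  assumes "condH b H" "x \<in> interior (Kset b)"
  shows "dHp H x (argminp H x) = 0"
proof -
  obtain m where "\<And>p. H x m \<le> H x p" using condH_global_min[OF assms] by blast
  then have "is_arg_min (H x) (\<lambda>_. True) m" by (simp add: is_arg_min_linorder)
  then have "is_arg_min (H x) (\<lambda>_. True) (argminp H x)"
    unfolding argminp_def arg_min_def by (rule someI)
  then have "\<forall>p. H x (argminp H x) \<le> H x p" by (simp add: is_arg_min_linorder)
  moreover have "(H x has_real_derivative dHp H x (argminp H x)) (at (argminp H x))"
    using assms interior_subset by (auto simp: condH_def intro: condH1_has_derivative_dHp)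
  ultimately show ?thesis by (intro DERIV_local_min[of _ _ _ 1]) auto
qed

lemma condH_upper_trap:
  assumes "condH b H" "u \<in> interior (Kset b)"
  obtains y q w where "u < y" "y \<in> interior (Kset b)" "w \<in> interior (Kset b)"
    "upper_trap (Kset b) (dHp H) (\<lambda>x p. - dHx H x p) y q w"
proof -
  have H1: "condH1 b H" and H4: "condH4 b H" using assms(1) by (simp_all add: condH_def)
  obtain yp qp :: "nat \<Rightarrow> real" where yp: "\<forall>n. yp n \<in> interior (Kset b) \<and> 0 < qp n"
    "filterlim yp (to_dplus b) sequentially" "\<forall>n p. qp n \<le> p \<longrightarrow> 0 \<le> dHp H (yp n) p"
    "\<forall>n x. x \<in> Kset b \<and> yp n \<le> x \<longrightarrow> 0 \<le> - dHx H x (qp n)"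
    using assms(1) unfolding condH_def condH5_def by blast
  show thesis
  proof (rule upper_trap_exists[of b "dHp H" "argminp H" yp qp "\<lambda>x p. - dHx H x p" u])
    show "strict_mono (dHp H x)" if "x \<in> Kset b" for x using condH1_strict_mono_dHp[OF H1 that] .
    show "dHp H x (argminp H x) = 0" if "x \<in> interior (Kset b)" for x
      using condH_argminp_critical[OF assms(1) that] .
    show "filterlim (argminp H) at_top (to_dplus b)" using H4 by (simp add: condH4_def)
    show "continuous_on (Kset b) (\<lambda>x. dHp H x p)" for p using condH1_continuous_dHp[OF H1] .
  qed (use yp that assms(2) in blast)+
qed

text \<open>The lower end of \<open>K\<close> is the upper end for the Hamiltonian \<open>H(-x,-p)\<close>, whose Hamiltonian
  vector field is the mirror image of that of \<open>H\<close>.\<close>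
lemma condH_lower_trap:
  assumes "condH b H" "u \<in> interior (Kset b)"
  obtains y q w where "u < y" "y \<in> interior (Kset b)" "w \<in> interior (Kset b)"
    "upper_trap (Kset b) (mirror (dHp H)) (mirror (\<lambda>x p. - dHx H x p)) y q w"
proof -
  have H1: "condH1 b H" and H4: "condH4 b H" using assms(1) by (simp_all add: condH_def)
  obtain ym qm :: "nat \<Rightarrow> real" where ym: "\<forall>n. ym n \<in> interior (Kset b) \<and> qm n < 0"
    and ym_lim: "filterlim ym (to_dminus b) sequentially"
    and F_ym: "\<forall>n p. p \<le> qm n \<longrightarrow> dHp H (ym n) p \<le> 0"
    and G_qm: "\<forall>n x. x \<in> Kset b \<and> x \<le> ym n \<longrightarrow> - dHx H x (qm n) \<le> 0"
    using assms(1) unfolding condH_def condH5_def by blast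
  show thesis
  proof (rule upper_trap_exists[of b "mirror (dHp H)" "\<lambda>x. - argminp H (- x)" "\<lambda>n. - ym n" "\<lambda>n. - qm n"])
    show "strict_mono (mirror (dHp H) x)" if "x \<in> Kset b" for x
      using condH1_strict_mono_dHp[OF H1 uminus_in_Kset[OF that]]
      by (auto simp: strict_mono_def mirror_def)
    show "mirror (dHp H) x (- argminp H (- x)) = 0" if "x \<in> interior (Kset b)" for x
      using condH_argminp_critical[OF assms(1) uminus_in_interior_Kset[OF that]] by (simp add: mirror_def)
    have "filterlim (argminp H) at_bot (to_dminus b)" using H4 by (simp add: condH4_def)
    from filterlim_compose[OF this filterlim_uminus_to_dminus]
    have "filterlim (\<lambda>x. argminp H (- x)) at_bot (to_dplus b)" .
    then show "filterlim (\<lambda>x. - argminp H (- x)) at_top (to_dplus b)"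
      by (simp add: filterlim_uminus_at_bot)
    show "continuous_on (Kset b) (\<lambda>x. mirror (dHp H) x p)" for p
    proof -
      have "continuous_on (Kset b) (\<lambda>x. dHp H (- x) (- p))"
        by (rule continuous_on_compose2[OF condH1_continuous_dHp[OF H1] continuous_on_minus[OF continuous_on_id]])
          (auto intro: uminus_in_Kset)
      then show ?thesis unfolding mirror_def by (rule continuous_on_minus)
    qed
    show "filterlim (\<lambda>n. - ym n) (to_dplus b) sequentially"
      by (rule filterlim_compose[OF filterlim_uminus_to_dplus ym_lim])
    show "- ym n \<in> interior (Kset b)" for n using uminus_in_interior_Kset ym by blast
    show "0 \<le> mirror (dHp H) (- ym n) p" if "- qm n \<le> p" for n p
      using F_ym that by (simp add: mirror_def)
    show "0 \<le> mirror (\<lambda>x p. - dHx H x p) x (- qm n)" if "x \<in> Kset b" "- ym n \<le> x" for n x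
      using G_qm that uminus_in_Kset by (simp add: mirror_def)
  qed (use assms(2) that in blast)+
qed

lemma Xflow_confined:
  assumes H1: "condH1 b H"
    and trap_right: "upper_trap (Kset b) (dHp H) (\<lambda>x p. - dHx H x p) y1 q1 w1"
    and trap_left: "upper_trap (Kset b) (mirror (dHp H)) (mirror (\<lambda>x p. - dHx H x p)) y2 q2 w2"
    and "u < y1" "y1 \<le> v" "w1 \<le> v" "u < y2" "y2 \<le> v" "w2 \<le> v"
    and "x \<in> {-v<..<v}" "ereal t < exit_time b H x p" "Xflow b H x p t \<in> {-u<..<u}" and s: "s \<in> {0..t}"
  shows "Xflow b H x p s \<in> {-v<..<v}"
proof -
  obtain T Y where hs: "ham_sol b H x p T Y" and "t < T"
    using \<open>ereal t < exit_time b H x p\<close> unfolding exit_time_def less_SUP_iff by auto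
  define X P where "X r = fst (Y r)" and "P r = snd (Y r)" for r
  have sol: "planar_solution (dHp H) (\<lambda>x p. - dHx H x p) 0 t X P"
    and inK: "\<And>r. r \<in> {0..t} \<Longrightarrow> X r \<in> Kset b"
    using ham_sol_planar_solution[OF hs \<open>t < T\<close>] unfolding X_def P_def by auto
  have flow: "Xflow b H x p r = X r" if "r \<in> {0..t}" for r
    using Xflow_eq[OF H1 hs] that \<open>t < T\<close> by (simp add: X_def)
  have "0 \<le> t" "X 0 = x" using s hs by (auto simp: X_def ham_sol_def)
  have lip: "lipschitz_on_bounded_sets (Kset b) (dHp H)"
    "lipschitz_on_bounded_sets (Kset b) (\<lambda>x p. - dHx H x p)"
    using condH1_lipschitz[OF H1] by (auto intro: lipschitz_on_bounded_sets_uminus)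
  have "X 0 < v" "- X 0 < v" using \<open>X 0 = x\<close> \<open>x \<in> {-v<..<v}\<close> by auto
  have "X t < u" "- X t < u" using flow[of t] \<open>0 \<le> t\<close> \<open>Xflow b H x p t \<in> {-u<..<u}\<close> by auto
  have "X s < v"
    by (rule planar_solution_stays_below[OF sol \<open>0 \<le> t\<close> inK lip trap_right \<open>u < y1\<close> \<open>y1 \<le> v\<close>
          \<open>w1 \<le> v\<close> \<open>X 0 < v\<close> \<open>X t < u\<close> s])
  moreover have "- X s < v"
  proof (rule planar_solution_stays_below[OF planar_solution_mirror[OF sol] \<open>0 \<le> t\<close> _
        lipschitz_on_bounded_sets_mirror[OF lip(1) uminus_in_Kset]
        lipschitz_on_bounded_sets_mirror[OF lip(2) uminus_in_Kset] trap_left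
        \<open>u < y2\<close> \<open>y2 \<le> v\<close> \<open>w2 \<le> v\<close> \<open>- X 0 < v\<close> \<open>- X t < u\<close> s])
    show "- X r \<in> Kset b" if "r \<in> {0..t}" for r using inK[OF that] by (rule uminus_in_Kset)
  qed
  ultimately show ?thesis using flow s by auto
qed

theorem mainTheorem11:
  fixes b :: bool and H :: "real \<Rightarrow> real \<Rightarrow> real" and u :: real
  assumes "condH b H"
    and "0 < u" and "u \<in> interior (Kset b)"
  shows "\<exists>v. u < v \<and> v \<in> interior (Kset b) \<and>
           (\<forall>t x p. 0 \<le> t \<and> x \<in> {-v<..<v} \<and> ereal t < exit_time b H x p \<and>
                    Xflow b H x p t \<in> {-u<..<u} \<longrightarrow>
                    (\<forall>s\<in>{0..t}. Xflow b H x p s \<in> {-v<..<v}))"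
proof -
  have H1: "condH1 b H" using assms(1) by (simp add: condH_def)
  obtain y1 q1 w1 where "u < y1" "y1 \<in> interior (Kset b)" "w1 \<in> interior (Kset b)"
    and trap_right: "upper_trap (Kset b) (dHp H) (\<lambda>x p. - dHx H x p) y1 q1 w1"
    using condH_upper_trap[OF assms(1,3)] .
  obtain y2 q2 w2 where "u < y2" "y2 \<in> interior (Kset b)" "w2 \<in> interior (Kset b)"
    and trap_left: "upper_trap (Kset b) (mirror (dHp H)) (mirror (\<lambda>x p. - dHx H x p)) y2 q2 w2"
    using condH_lower_trap[OF assms(1,3)] .
  obtain v where "v \<in> interior (Kset b)" and above: "\<And>a. a \<in> {u, y1, w1, y2, w2} \<Longrightarrow> a < v"
    by (rule interior_Kset_upper_bound[of "{u, y1, w1, y2, w2}"])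
      (use assms(3) \<open>y1 \<in> _\<close> \<open>w1 \<in> _\<close> \<open>y2 \<in> _\<close> \<open>w2 \<in> _\<close> in auto)
  have "u < v" "y1 \<le> v" "w1 \<le> v" "y2 \<le> v" "w2 \<le> v"
    using above[of u] above[of y1] above[of w1] above[of y2] above[of w2] by simp_all
  show ?thesis
  proof (intro exI[of _ v] conjI allI impI ballI)
    fix t x p s
    assume "0 \<le> t \<and> x \<in> {-v<..<v} \<and> ereal t < exit_time b H x p \<and> Xflow b H x p t \<in> {-u<..<u}"
      and "s \<in> {0..t}"
    then show "Xflow b H x p s \<in> {-v<..<v}"
      using Xflow_confined[OF H1 trap_right trap_left \<open>u < y1\<close> \<open>y1 \<le> v\<close> \<open>w1 \<le> v\<close> \<open>u < y2\<close>
          \<open>y2 \<le> v\<close> \<open>w2 \<le> v\<close>] by blast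
  qed (use \<open>u < v\<close> \<open>v \<in> interior (Kset b)\<close> in auto)
qed

end
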